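(* Let $n\ge d\ge 1$, let $\{\tilde Q(\theta):\theta\in\Theta\}$ be an orthogonal reduction parameterization of $O(d+1)$ to $e_1$, with blocks $\tilde Q(\theta)=\begin{pmatrix}\mu(\theta)&y(\theta)^*\\ x(\theta)&\tilde O(\theta)\end{pmatrix}$, and let $Q^{(k)}(\theta)$ be its embedding as defined below. Define $\Phi:\Theta^n\to\mathbb{R}^{(n+d)\times n}$ by $\Phi(\theta_1,\dots,\theta_n)=Q^{(n)}(\theta_n)\cdots Q^{(1)}(\theta_1)\begin{pmatrix}\mathbb{I}_n\\ 0_{d,n}\end{pmatrix}$, and identify a pair $(A,C)$ with its stack $\begin{pmatrix} C\\ A\end{pmatrix}$. Then $\Phi$ restricted to $\{(\theta_1,\dots,\theta_n):\mu(\theta_k)>0\ \forall k\}$ is a one-to-one correspondence onto the set of strict OTSON pairs, and $\Phi$ restricted to $\{(\theta_1,\dots,\theta_n):\mu(\theta_k)\neq 0\ \forall k\}$ is a one-to-one correspondence onto the set of unreduced OTSON pairs.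
   Context: ${}^*$ denotes transpose; $A$ is real $n\times n$, $C$ real $d\times n$, $Q=\begin{pmatrix} C\\ A\end{pmatrix}$. $(A,C)$ is OTSON if $A^*A=\mathbb{I}_n-C^*C$ and $Q_{i,j}=0$ for $j>i$; it is unreduced if $Q_{i,i}\ne 0$ for all $1\le i\le n$, and strict if $Q_{i,i}>0$ for all $1\le i\le n$. An orthogonal reduction parameterization (ORP) of $O(m)$ to $e_k$ is a family $\{\tilde Q(\theta):\theta\in\Theta\}$, $\Theta\subset\mathbb{R}^{m-1}$, of real orthogonal $m\times m$ matrices such that for every nonzero $h\in\mathbb{R}^m$ there is a unique $\theta(h)\in\Theta$ with $\tilde Q(\theta)^*h=\|h\|e_k$. Here $\mu\in\mathbb{R}$, $x,y\in\mathbb{R}^d$, $\tilde O\in\mathbb{R}^{d\times d}$, and the embedding is $Q^{(k)}(\theta)=\mathbb{I}_{k-1}\oplus\begin{pmatrix}\mu&0_{1,n-k}&y^*\\ 0_{n-k,1}&\mathbb{I}_{n-k}&0_{n-k,d}\\ x&0_{d,n-k}&\tilde O\end{pmatrix}$ (all blocks evaluated at $\theta$), an $(n+d)\times(n+d)$ matrix. *)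

theory Defs
  imports "Jordan_Normal_Form.Matrix"
begin

(* Conventions: matrices are Jordan_Normal_Form matrices ('a mat), indices 0-based.
   Paper's 1-based index i corresponds to i-1 here. *)

definition vnorm :: "real vec \<Rightarrow> real" where
  "vnorm h = sqrt (h \<bullet> h)"

definition orthogonal_mat :: "nat \<Rightarrow> real mat \<Rightarrow> bool" where
  "orthogonal_mat m Q \<longleftrightarrow> Q \<in> carrier_mat m m \<and> transpose_mat Q * Q = 1\<^sub>m m"

definition ORP :: "nat \<Rightarrow> nat \<Rightarrow> real vec set \<Rightarrow> (real vec \<Rightarrow> real mat) \<Rightarrow> bool" where
  "ORP m k Theta Qt \<longleftrightarrow>
     Theta \<subseteq> carrier_vec (m - 1) \<and>
     (\<forall>\<theta>\<in>Theta. orthogonal_mat m (Qt \<theta>)) \<and>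
     (\<forall>h\<in>carrier_vec m. h \<noteq> 0\<^sub>v m \<longrightarrow>
        (\<exists>!\<theta>. \<theta> \<in> Theta \<and> transpose_mat (Qt \<theta>) *\<^sub>v h = vnorm h \<cdot>\<^sub>v unit_vec m (k - 1)))"

definition blk_mu :: "(real vec \<Rightarrow> real mat) \<Rightarrow> real vec \<Rightarrow> real" where
  "blk_mu Qt \<theta> = Qt \<theta> $$ (0, 0)"

definition blk_x :: "nat \<Rightarrow> (real vec \<Rightarrow> real mat) \<Rightarrow> real vec \<Rightarrow> real vec" where
  "blk_x d Qt \<theta> = vec d (\<lambda>i. Qt \<theta> $$ (i + 1, 0))"

definition blk_y :: "nat \<Rightarrow> (real vec \<Rightarrow> real mat) \<Rightarrow> real vec \<Rightarrow> real vec" where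
  "blk_y d Qt \<theta> = vec d (\<lambda>j. Qt \<theta> $$ (0, j + 1))"

definition blk_O :: "nat \<Rightarrow> (real vec \<Rightarrow> real mat) \<Rightarrow> real vec \<Rightarrow> real mat" where
  "blk_O d Qt \<theta> = mat d d (\<lambda>(i, j). Qt \<theta> $$ (i + 1, j + 1))"

(* Embedding Q^(k)(theta) = I_{k-1} \<oplus> [[mu, 0, y^*],[0, I_{n-k}, 0],[x, 0, O~]],
   an (n+d) x (n+d) matrix; k is 1-based (1 \<le> k \<le> n).  In 0-based indices the
   mu-row/column is k-1 and the last d rows/columns are n, ..., n+d-1. *)
definition embed :: "nat \<Rightarrow> nat \<Rightarrow> (real vec \<Rightarrow> real mat) \<Rightarrow> nat \<Rightarrow> real vec \<Rightarrow> real mat" where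
  "embed n d Qt k \<theta> = mat (n + d) (n + d) (\<lambda>(i, j).
     if i = k - 1 \<and> j = k - 1 then blk_mu Qt \<theta>
     else if i = k - 1 \<and> n \<le> j then blk_y d Qt \<theta> $ (j - n)
     else if n \<le> i \<and> j = k - 1 then blk_x d Qt \<theta> $ (i - n)
     else if n \<le> i \<and> n \<le> j then blk_O d Qt \<theta> $$ (i - n, j - n)
     else if i = k - 1 \<or> j = k - 1 \<or> n \<le> i \<or> n \<le> j then 0
     else if i = j then 1 else 0)"

(* Q^(j)(theta_j) ... Q^(1)(theta_1); ths ! (j-1) = theta_j *)
fun embed_prod :: "nat \<Rightarrow> nat \<Rightarrow> (real vec \<Rightarrow> real mat) \<Rightarrow> real vec list \<Rightarrow> nat \<Rightarrow> real mat" where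
  "embed_prod n d Qt ths 0 = 1\<^sub>m (n + d)"
| "embed_prod n d Qt ths (Suc j) = embed n d Qt (Suc j) (ths ! j) * embed_prod n d Qt ths j"

definition top_id :: "nat \<Rightarrow> nat \<Rightarrow> real mat" where
  "top_id n d = mat (n + d) n (\<lambda>(i, j). if i = j then 1 else 0)"

definition Phi :: "nat \<Rightarrow> nat \<Rightarrow> (real vec \<Rightarrow> real mat) \<Rightarrow> real vec list \<Rightarrow> real mat" where
  "Phi n d Qt ths = embed_prod n d Qt ths n * top_id n d"

definition stack :: "nat \<Rightarrow> nat \<Rightarrow> real mat \<Rightarrow> real mat \<Rightarrow> real mat" where
  "stack n d C A = mat (d + n) n (\<lambda>(i, j). if i < d then C $$ (i, j) else A $$ (i - d, j))"

definition OTSON :: "nat \<Rightarrow> nat \<Rightarrow> real mat \<Rightarrow> real mat \<Rightarrow> bool" where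
  "OTSON n d A C \<longleftrightarrow> A \<in> carrier_mat n n \<and> C \<in> carrier_mat d n \<and>
     transpose_mat A * A = 1\<^sub>m n - transpose_mat C * C \<and>
     (\<forall>i < d + n. \<forall>j < n. i < j \<longrightarrow> stack n d C A $$ (i, j) = 0)"

definition unreduced_OTSON :: "nat \<Rightarrow> nat \<Rightarrow> real mat \<Rightarrow> real mat \<Rightarrow> bool" where
  "unreduced_OTSON n d A C \<longleftrightarrow> OTSON n d A C \<and> (\<forall>i < n. stack n d C A $$ (i, i) \<noteq> 0)"

definition strict_OTSON :: "nat \<Rightarrow> nat \<Rightarrow> real mat \<Rightarrow> real mat \<Rightarrow> bool" where
  "strict_OTSON n d A C \<longleftrightarrow> OTSON n d A C \<and> (\<forall>i < n. stack n d C A $$ (i, i) > 0)"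

end

theory Submission
  imports Defs "Jordan_Normal_Form.Determinant"
begin

(* Both sides are identified with the set of lower-triangular (n+d) x n matrices with orthonormal
   columns: for a stacked pair [C; A] this is A^T A + C^T C = I together with the zero pattern.
   Each Q^(k)(theta) is orthogonal and acts, as Qt(theta), only on the rows k, n+1, ..., n+d.
   Hence Q^(k) ... Q^(1) [I; 0] still has the unit vectors e_(k+1), ..., e_n as its last columns,
   and its k-th column is the first column of Qt(theta_k) spread over those rows, with diagonal
   entry mu(theta_k).  Conversely, if M is such a matrix whose columns k+1, ..., n are unit
   vectors, its k-th column is a unit vector supported on the rows k, n+1, ..., n+d (above the
   diagonal by triangularity, between k and n by orthogonality to the unit columns).  The ORP
   property yields exactly one theta_k for which it is the first column of Qt(theta_k), and
   Q^(k)(theta_k)^T M has unit columns k, ..., n; so the parameters are peeled off uniquely,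
   from theta_n down to theta_1. *)

definition lower_triangular :: "'a::zero mat \<Rightarrow> bool" where
  "lower_triangular M \<longleftrightarrow> (\<forall>i<dim_row M. \<forall>j<dim_col M. i < j \<longrightarrow> M $$ (i, j) = 0)"

definition unit_cols_from :: "nat \<Rightarrow> 'a::zero_neq_one mat \<Rightarrow> bool" where
  "unit_cols_from j M \<longleftrightarrow>
     (\<forall>i<dim_row M. \<forall>c<dim_col M. j \<le> c \<longrightarrow> M $$ (i, c) = (if i = c then 1 else 0))"

definition triangular_isometries :: "nat \<Rightarrow> nat \<Rightarrow> (real \<Rightarrow> bool) \<Rightarrow> real mat set" where
  "triangular_isometries r c p = {M \<in> carrier_mat r c. transpose_mat M * M = 1\<^sub>m c \<and>
     lower_triangular M \<and> (\<forall>k<c. p (M $$ (k, k)))}"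

lemma mult_mat_entry:
  assumes "A \<in> carrier_mat r m" "B \<in> carrier_mat m c" "i < r" "j < c"
  shows "(A * B) $$ (i, j) = (\<Sum>k\<in>{0..<m}. A $$ (i, k) * B $$ (k, j))"
  using assms by (auto simp: scalar_prod_def)

lemma transpose_mult_mat_entry:
  assumes "A \<in> carrier_mat r m" "B \<in> carrier_mat r c" "i < m" "j < c"
  shows "(transpose_mat A * B) $$ (i, j) = (\<Sum>k\<in>{0..<r}. A $$ (k, i) * B $$ (k, j))"
  using assms by (auto simp: scalar_prod_def)

lemma mult_mat_unit_row:
  fixes A B :: "'a::semiring_1 mat"
  assumes "A \<in> carrier_mat r m" "B \<in> carrier_mat m c" "i < r" "i < m" "j < c"
    and "\<And>k. k < m \<Longrightarrow> A $$ (i, k) = (if k = i then 1 else 0)"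
  shows "(A * B) $$ (i, j) = B $$ (i, j)"
proof -
  have "(A * B) $$ (i, j) = (\<Sum>k\<in>{0..<m}. if k = i then B $$ (k, j) else 0)"
    unfolding mult_mat_entry[OF assms(1-3,5)] by (rule sum.cong) (use assms(6) in auto)
  then show ?thesis using assms(4) by simp
qed

lemma mult_mat_unit_col:
  fixes A B :: "'a::semiring_1 mat"
  assumes "A \<in> carrier_mat r m" "B \<in> carrier_mat m c" "i < r" "j < c" "j < m"
    and "\<And>k. k < m \<Longrightarrow> B $$ (k, j) = (if k = j then 1 else 0)"
  shows "(A * B) $$ (i, j) = A $$ (i, j)"
proof -
  have "(A * B) $$ (i, j) = (\<Sum>k\<in>{0..<m}. if k = j then A $$ (i, k) else 0)"
    unfolding mult_mat_entry[OF assms(1-4)] by (rule sum.cong) (use assms(6) in auto)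
  then show ?thesis using assms(5) by simp
qed

lemma orthogonal_mult_gram:
  fixes Q M :: "'a::comm_ring_1 mat"
  assumes Q: "Q \<in> carrier_mat r r" and M: "M \<in> carrier_mat r c"
    and orth: "transpose_mat Q * Q = 1\<^sub>m r"
  shows "transpose_mat (Q * M) * (Q * M) = transpose_mat M * M"
proof -
  have "transpose_mat (Q * M) * (Q * M) = transpose_mat M * (transpose_mat Q * Q) * M"
    using Q M by (simp add: transpose_mult[OF Q M] assoc_mult_mat[of _ c r _ r _ c]
        assoc_mult_mat[of _ r r _ r _ c])
  then show ?thesis using M orth by simp
qed

lemma orthogonal_mult_cancel:
  fixes Q M M' :: "'a::comm_ring_1 mat"
  assumes Q: "Q \<in> carrier_mat r r" and M: "M \<in> carrier_mat r c" and M': "M' \<in> carrier_mat r c"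
    and orth: "transpose_mat Q * Q = 1\<^sub>m r" and eq: "Q * M = Q * M'"
  shows "M = M'"
proof -
  have "M = transpose_mat Q * (Q * M)" "M' = transpose_mat Q * (Q * M')"
    using Q M M' orth by (simp_all add: assoc_mult_mat[symmetric, of _ r r _ r _ c])
  then show ?thesis using eq by simp
qed

lemma lower_isometry_col_support:
  fixes M :: "'a::semiring_1 mat"
  assumes M: "M \<in> carrier_mat r c" and rc: "c \<le> r" and gram: "transpose_mat M * M = 1\<^sub>m c"
    and tri: "lower_triangular M" and cols: "unit_cols_from (Suc j) M"
    and j: "j < c" and k: "k < c" "k \<noteq> j"
  shows "M $$ (k, j) = 0"
proof (cases "k < j")
  case True
  then show ?thesis
    using tri M j rc by (simp add: lower_triangular_def)
next
  case False
  then have "Suc j \<le> k"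
    using k by simp
  then have "(transpose_mat M * M) $$ (k, j) = M $$ (k, j)"
    using M k rc cols
    by (intro mult_mat_unit_row[OF transpose_carrier_mat[THEN iffD2, OF M] M]) (auto simp: unit_cols_from_def j)
  then show ?thesis
    using gram k j by simp
qed

lemma top_id_carrier: "top_id n d \<in> carrier_mat (n + d) n"
  by (simp add: top_id_def)

lemma top_id_gram: "transpose_mat (top_id n d) * top_id n d = 1\<^sub>m n"
proof (rule eq_matI)
  fix a b assume "a < dim_row (1\<^sub>m n :: real mat)" "b < dim_col (1\<^sub>m n :: real mat)"
  then have a: "a < n" and b: "b < n" by auto
  have "(transpose_mat (top_id n d) * top_id n d) $$ (a, b) = transpose_mat (top_id n d) $$ (a, b)"
    by (rule mult_mat_unit_col[of _ n "n + d" _ n]) (use a b in \<open>auto simp: top_id_def\<close>)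
  then show "(transpose_mat (top_id n d) * top_id n d) $$ (a, b) = 1\<^sub>m n $$ (a, b)"
    using a b by (simp add: top_id_def)
qed (simp_all add: top_id_def)

lemma unit_cols_from_0_iff:
  assumes "M \<in> carrier_mat (n + d) n"
  shows "unit_cols_from 0 M \<longleftrightarrow> M = top_id n d"
  using assms by (auto simp: unit_cols_from_def top_id_def mat_eq_iff)

section \<open>Stacked OTSON pairs\<close>

lemma stack_carrier: "stack n d C A \<in> carrier_mat (d + n) n"
  by (simp add: stack_def)

lemma sum_upt_add:
  fixes d n :: nat
  shows "(\<Sum>k\<in>{0..<d + n}. f k) = (\<Sum>k\<in>{0..<d}. f k) + (\<Sum>k\<in>{0..<n}. f (k + d) :: 'a::comm_monoid_add)"
  by (induction n) (simp_all add: ac_simps)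

lemma stack_gram:
  assumes A: "A \<in> carrier_mat n n" and C: "C \<in> carrier_mat d n"
  shows "transpose_mat (stack n d C A) * stack n d C A = transpose_mat C * C + transpose_mat A * A"
proof (rule eq_matI)
  fix a b assume "a < dim_row (transpose_mat C * C + transpose_mat A * A)"
    "b < dim_col (transpose_mat C * C + transpose_mat A * A)"
  then have a: "a < n" and b: "b < n" using A C by auto
  have "(transpose_mat (stack n d C A) * stack n d C A) $$ (a, b)
      = (\<Sum>k\<in>{0..<d}. C $$ (k, a) * C $$ (k, b)) + (\<Sum>k\<in>{0..<n}. A $$ (k, a) * A $$ (k, b))"
    unfolding transpose_mult_mat_entry[OF stack_carrier stack_carrier a b] sum_upt_add
    using a b by (simp add: stack_def)
  also have "\<dots> = (transpose_mat C * C + transpose_mat A * A) $$ (a, b)"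
    using a b A C by (simp add: scalar_prod_def)
  finally show "(transpose_mat (stack n d C A) * stack n d C A) $$ (a, b)
      = (transpose_mat C * C + transpose_mat A * A) $$ (a, b)" .
qed (use A C in \<open>auto simp: stack_def\<close>)

lemma OTSON_iff_stack:
  "OTSON n d A C \<longleftrightarrow> A \<in> carrier_mat n n \<and> C \<in> carrier_mat d n \<and>
     transpose_mat (stack n d C A) * stack n d C A = 1\<^sub>m n \<and> lower_triangular (stack n d C A)"
proof -
  have "transpose_mat A * A = 1\<^sub>m n - transpose_mat C * C \<longleftrightarrow>
      transpose_mat C * C + transpose_mat A * A = 1\<^sub>m n"
    if "A \<in> carrier_mat n n" "C \<in> carrier_mat d n"
    using that by (auto simp: mat_eq_iff eq_diff_eq add.commute)
  then show ?thesis
    using stack_carrier[of n d C A]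
    by (simp add: OTSON_def stack_gram lower_triangular_def conj_ac cong: conj_cong)
qed

lemma stack_OTSON_image:
  "(\<lambda>(A, C). stack n d C A) ` {(A, C). OTSON n d A C \<and> (\<forall>i<n. p (stack n d C A $$ (i, i)))}
   = triangular_isometries (n + d) n p"
  (is "?L = ?R")
proof
  have "stack n d C A \<in> carrier_mat (n + d) n" for C A
    using stack_carrier by (metis add.commute)
  then show "?L \<subseteq> ?R"
    by (auto simp: OTSON_iff_stack triangular_isometries_def)
  show "?R \<subseteq> ?L"
  proof
    fix M assume M: "M \<in> ?R"
    define A where "A = mat n n (\<lambda>(i, j). M $$ (i + d, j))"
    define C where "C = mat d n (\<lambda>(i, j). M $$ (i, j))"
    have "stack n d C A = M"
      using M by (intro eq_matI) (auto simp: stack_def A_def C_def triangular_isometries_def)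
    moreover have "A \<in> carrier_mat n n" "C \<in> carrier_mat d n"
      by (simp_all add: A_def C_def)
    ultimately show "M \<in> ?L"
      using M by (intro image_eqI[of _ _ "(A, C)"]) (auto simp: OTSON_iff_stack triangular_isometries_def)
  qed
qed

section \<open>The embedded matrices Q^(k)\<close>

(* block_idx n j enumerates the rows j, n, n + 1, ..., n + d - 1 on which the embedding of
   Qt acts, in the order of the rows 0, ..., d of Qt. *)
definition block_idx :: "nat \<Rightarrow> nat \<Rightarrow> nat \<Rightarrow> nat" where
  "block_idx n j s = (if s = 0 then j else n + s - 1)"

lemma block_idx_0 [simp]: "block_idx n j 0 = j"
  by (simp add: block_idx_def)

lemma block_idx_less: "j < n \<Longrightarrow> s < Suc d \<Longrightarrow> block_idx n j s < n + d"
  by (auto simp: block_idx_def)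

lemma block_idx_eq_iff: "j < n \<Longrightarrow> block_idx n j s = block_idx n j t \<longleftrightarrow> s = t"
  by (auto simp: block_idx_def)

lemma block_idx_neq: "j < n \<Longrightarrow> k < n \<Longrightarrow> k \<noteq> j \<Longrightarrow> block_idx n j s \<noteq> k"
  by (auto simp: block_idx_def)

lemma block_idx_cases:
  assumes "a < n + d"
  obtains "a < n" "a \<noteq> j" | s where "s < Suc d" "a = block_idx n j s"
proof (cases "a < n \<and> a \<noteq> j")
  case False
  show ?thesis
  proof (cases "a = j")
    case True
    then show ?thesis using that(2)[of 0] by simp
  next
    case False
    then have "n \<le> a" using \<open>\<not> (a < n \<and> a \<noteq> j)\<close> by simp
    then show ?thesis using that(2)[of "a + 1 - n"] assms False by (simp add: block_idx_def)
  qed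
qed blast

lemma sum_block_idx:
  assumes j: "j < n" and zero: "\<And>k. k < n \<Longrightarrow> k \<noteq> j \<Longrightarrow> f k = 0"
  shows "(\<Sum>k\<in>{0..<n + d}. f k) = (\<Sum>s\<in>{0..<Suc d}. f (block_idx n j s))"
proof -
  have "(\<Sum>k\<in>{0..<n + d}. f k) = (\<Sum>k\<in>block_idx n j ` {0..<Suc d}. f k)"
  proof (rule sum.mono_neutral_right)
    show "block_idx n j ` {0..<Suc d} \<subseteq> {0..<n + d}"
      using block_idx_less[OF j] by auto
    show "\<forall>k\<in>{0..<n + d} - block_idx n j ` {0..<Suc d}. f k = 0"
    proof
      fix k assume k: "k \<in> {0..<n + d} - block_idx n j ` {0..<Suc d}"
      then have "k < n + d" by simp
      then show "f k = 0"
        by (cases rule: block_idx_cases[of _ _ _ j]) (use k zero in auto)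
    qed
  qed simp
  also have "\<dots> = (\<Sum>s\<in>{0..<Suc d}. f (block_idx n j s))"
    by (simp add: sum.reindex inj_on_def block_idx_eq_iff[OF j])
  finally show ?thesis .
qed

locale orthogonal_reduction =
  fixes n d :: nat and Theta :: "real vec set" and Qt :: "real vec \<Rightarrow> real mat"
  assumes orp: "ORP (d + 1) 1 Theta Qt"
begin

(* Qemb j is the paper's Q^(j+1): columns and parameter lists are indexed from 0. *)
abbreviation Qemb :: "nat \<Rightarrow> real vec \<Rightarrow> real mat" where
  "Qemb j \<theta> \<equiv> embed n d Qt (Suc j) \<theta>"

lemma embed_carrier: "Qemb j \<theta> \<in> carrier_mat (n + d) (n + d)"
  by (simp add: embed_def)

lemma embed_block:
  assumes "j < n" "s < Suc d" "t < Suc d"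
  shows "Qemb j \<theta> $$ (block_idx n j s, block_idx n j t) = Qt \<theta> $$ (s, t)"
  using assms by (auto simp: embed_def block_idx_def blk_mu_def blk_x_def blk_y_def blk_O_def)

lemma embed_outside:
  assumes "j < n" "a < n" "a \<noteq> j" "b < n + d"
  shows "Qemb j \<theta> $$ (a, b) = (if b = a then 1 else 0)"
    and "Qemb j \<theta> $$ (b, a) = (if b = a then 1 else 0)"
  using assms by (auto simp: embed_def)

lemma embed_diag: "j < n \<Longrightarrow> Qemb j \<theta> $$ (j, j) = blk_mu Qt \<theta>"
  using embed_block[of j 0 0 \<theta>] by (simp add: blk_mu_def)

lemma Qt_carrier: "\<theta> \<in> Theta \<Longrightarrow> Qt \<theta> \<in> carrier_mat (Suc d) (Suc d)"
  using orp by (auto simp: ORP_def orthogonal_mat_def)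

lemma Qt_orthogonal: "\<theta> \<in> Theta \<Longrightarrow> transpose_mat (Qt \<theta>) * Qt \<theta> = 1\<^sub>m (Suc d)"
  using orp by (auto simp: ORP_def orthogonal_mat_def)

lemma embed_orthogonal:
  assumes j: "j < n" and \<theta>: "\<theta> \<in> Theta"
  shows "transpose_mat (Qemb j \<theta>) * Qemb j \<theta> = 1\<^sub>m (n + d)"
proof (rule eq_matI)
  fix a b assume "a < dim_row (1\<^sub>m (n + d) :: real mat)" "b < dim_col (1\<^sub>m (n + d) :: real mat)"
  then have a: "a < n + d" and b: "b < n + d" by auto
  note E = embed_carrier[of j \<theta>]
  note Et = transpose_carrier_mat[THEN iffD2, OF E]
  show "(transpose_mat (Qemb j \<theta>) * Qemb j \<theta>) $$ (a, b) = 1\<^sub>m (n + d) $$ (a, b)"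
  proof (cases rule: block_idx_cases[OF a, of j])
    case 1
    have "(transpose_mat (Qemb j \<theta>) * Qemb j \<theta>) $$ (a, b) = Qemb j \<theta> $$ (a, b)"
      by (rule mult_mat_unit_row[OF Et E a a b]) (use a E embed_outside(2)[OF j 1] in simp)
    then show ?thesis
      using a b embed_outside(1)[OF j 1 b] by simp
  next
    case (2 s)
    note s = this
    show ?thesis
    proof (cases rule: block_idx_cases[OF b, of j])
      case 1
      have "(transpose_mat (Qemb j \<theta>) * Qemb j \<theta>) $$ (a, b) = transpose_mat (Qemb j \<theta>) $$ (a, b)"
        by (rule mult_mat_unit_col[OF Et E a b b]) (use embed_outside(2)[OF j 1] in simp)
      then show ?thesis
        using a b E embed_outside(1)[OF j 1 a] by auto
    next
      case (2 u)
      note u = this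
      have "(transpose_mat (Qemb j \<theta>) * Qemb j \<theta>) $$ (a, b)
          = (\<Sum>k\<in>{0..<n + d}. Qemb j \<theta> $$ (k, a) * Qemb j \<theta> $$ (k, b))"
        by (rule transpose_mult_mat_entry[OF E E a b])
      also have "\<dots> = (\<Sum>t\<in>{0..<Suc d}. Qt \<theta> $$ (t, s) * Qt \<theta> $$ (t, u))"
      proof (subst sum_block_idx[OF j])
        show "Qemb j \<theta> $$ (k, a) * Qemb j \<theta> $$ (k, b) = 0" if "k < n" "k \<noteq> j" for k
          using embed_outside(1)[OF j that a] block_idx_neq[OF j that] s by simp
        show "(\<Sum>t\<in>{0..<Suc d}. Qemb j \<theta> $$ (block_idx n j t, a) * Qemb j \<theta> $$ (block_idx n j t, b))
            = (\<Sum>t\<in>{0..<Suc d}. Qt \<theta> $$ (t, s) * Qt \<theta> $$ (t, u))"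
          using embed_block[OF j] s u by simp
      qed
      also have "\<dots> = (transpose_mat (Qt \<theta>) * Qt \<theta>) $$ (s, u)"
        using s(1) u(1) by (rule transpose_mult_mat_entry[OF Qt_carrier[OF \<theta>] Qt_carrier[OF \<theta>], symmetric])
      finally show ?thesis
        using Qt_orthogonal[OF \<theta>] s u a b block_idx_eq_iff[OF j] by simp
    qed
  qed
qed (simp_all add: embed_def)

lemma embed_orthogonal':
  "j < n \<Longrightarrow> \<theta> \<in> Theta \<Longrightarrow> Qemb j \<theta> * transpose_mat (Qemb j \<theta>) = 1\<^sub>m (n + d)"
  by (rule mat_mult_left_right_inverse) (simp_all add: embed_carrier embed_orthogonal)

lemma orp_reduction:
  assumes "h \<in> carrier_vec (Suc d)" "h \<noteq> 0\<^sub>v (Suc d)"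
  shows "\<exists>!\<theta>. \<theta> \<in> Theta \<and> transpose_mat (Qt \<theta>) *\<^sub>v h = vnorm h \<cdot>\<^sub>v unit_vec (Suc d) 0"
proof -
  have "\<forall>h\<in>carrier_vec (d + 1). h \<noteq> 0\<^sub>v (d + 1) \<longrightarrow>
      (\<exists>!\<theta>. \<theta> \<in> Theta \<and> transpose_mat (Qt \<theta>) *\<^sub>v h = vnorm h \<cdot>\<^sub>v unit_vec (d + 1) (1 - 1))"
    using orp unfolding ORP_def by (elim conjE)
  then show ?thesis
    using assms by (metis One_nat_def Suc_eq_plus1 diff_self_eq_0)
qed

lemma Qt_orthogonal': "\<theta> \<in> Theta \<Longrightarrow> Qt \<theta> * transpose_mat (Qt \<theta>) = 1\<^sub>m (Suc d)"
  by (rule mat_mult_left_right_inverse) (simp_all add: Qt_carrier Qt_orthogonal)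

lemma transpose_Qt_col0:
  assumes \<theta>: "\<theta> \<in> Theta"
  shows "transpose_mat (Qt \<theta>) *\<^sub>v col (Qt \<theta>) 0 = unit_vec (Suc d) 0"
proof (rule eq_vecI)
  fix s assume "s < dim_vec (unit_vec (Suc d) 0 :: real vec)"
  then have s: "s < Suc d" by simp
  have "(transpose_mat (Qt \<theta>) *\<^sub>v col (Qt \<theta>) 0) $ s = (transpose_mat (Qt \<theta>) * Qt \<theta>) $$ (s, 0)"
    using Qt_carrier[OF \<theta>] s by simp
  then show "(transpose_mat (Qt \<theta>) *\<^sub>v col (Qt \<theta>) 0) $ s = unit_vec (Suc d) 0 $ s"
    using Qt_orthogonal[OF \<theta>] s by simp
qed (use Qt_carrier[OF \<theta>] in simp)

lemma Qt_col0_norm: "\<theta> \<in> Theta \<Longrightarrow> vnorm (col (Qt \<theta>) 0) = 1"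
proof -
  assume \<theta>: "\<theta> \<in> Theta"
  have "row (transpose_mat (Qt \<theta>)) 0 \<bullet> col (Qt \<theta>) 0 = 1"
    using arg_cong[OF transpose_Qt_col0[OF \<theta>], of "\<lambda>v. v $ 0"] Qt_carrier[OF \<theta>] by simp
  then show ?thesis
    using Qt_carrier[OF \<theta>] by (simp add: vnorm_def)
qed

lemma Qt_col0_inj:
  assumes \<theta>: "\<theta> \<in> Theta" and \<theta>': "\<theta>' \<in> Theta" and eq: "col (Qt \<theta>) 0 = col (Qt \<theta>') 0"
  shows "\<theta> = \<theta>'"
proof -
  let ?h = "col (Qt \<theta>) 0"
  have "?h \<in> carrier_vec (Suc d)"
    using Qt_carrier[OF \<theta>] by (simp add: carrier_vecI)
  moreover have "?h \<noteq> 0\<^sub>v (Suc d)"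
    using Qt_col0_norm[OF \<theta>] by (auto simp: vnorm_def)
  ultimately have "\<exists>!\<phi>. \<phi> \<in> Theta \<and> transpose_mat (Qt \<phi>) *\<^sub>v ?h = vnorm ?h \<cdot>\<^sub>v unit_vec (Suc d) 0"
    by (rule orp_reduction)
  moreover have "transpose_mat (Qt \<theta>) *\<^sub>v ?h = vnorm ?h \<cdot>\<^sub>v unit_vec (Suc d) 0"
    using transpose_Qt_col0[OF \<theta>] Qt_col0_norm[OF \<theta>] by simp
  moreover have "transpose_mat (Qt \<theta>') *\<^sub>v ?h = vnorm ?h \<cdot>\<^sub>v unit_vec (Suc d) 0"
    using transpose_Qt_col0[OF \<theta>'] Qt_col0_norm[OF \<theta>'] eq by simp
  ultimately show ?thesis
    using \<theta> \<theta>' by blast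
qed

lemma Qt_col0_surj:
  assumes h: "h \<in> carrier_vec (Suc d)" and unit: "h \<bullet> h = 1"
  obtains \<theta> where "\<theta> \<in> Theta" "col (Qt \<theta>) 0 = h"
proof -
  have nz: "h \<noteq> 0\<^sub>v (Suc d)"
    using unit by auto
  have "vnorm h = 1"
    using unit by (simp add: vnorm_def)
  then obtain \<theta> where \<theta>: "\<theta> \<in> Theta" and Qh: "transpose_mat (Qt \<theta>) *\<^sub>v h = unit_vec (Suc d) 0"
    using orp_reduction[OF h nz] by (metis one_smult_vec)
  have "h = (Qt \<theta> * transpose_mat (Qt \<theta>)) *\<^sub>v h"
    using Qt_orthogonal'[OF \<theta>] h by simp
  also have "\<dots> = Qt \<theta> *\<^sub>v unit_vec (Suc d) 0"
    using Qt_carrier[OF \<theta>] h Qh by (simp add: assoc_mult_mat_vec[of _ "Suc d" "Suc d"])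
  also have "\<dots> = col (Qt \<theta>) 0"
    using Qt_carrier[OF \<theta>] by (intro eq_vecI) auto
  finally show ?thesis
    using that \<theta> by simp
qed

lemma embed_mult_row:
  assumes j: "j < n" and a: "a < n" "a \<noteq> j" and M: "M \<in> carrier_mat (n + d) m" and c: "c < m"
  shows "(Qemb j \<theta> * M) $$ (a, c) = M $$ (a, c)"
    and "(transpose_mat (Qemb j \<theta>) * M) $$ (a, c) = M $$ (a, c)"
proof -
  have a': "a < n + d" using a by simp
  note E = embed_carrier[of j \<theta>]
  show "(Qemb j \<theta> * M) $$ (a, c) = M $$ (a, c)"
    by (rule mult_mat_unit_row[OF E M a' a' c]) (use embed_outside(1)[OF j a] in simp)
  show "(transpose_mat (Qemb j \<theta>) * M) $$ (a, c) = M $$ (a, c)"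
    by (rule mult_mat_unit_row[OF transpose_carrier_mat[THEN iffD2, OF E] M a' a' c])
      (use a' E embed_outside(2)[OF j a] in simp)
qed

lemma embed_mult_unit_col:
  assumes j: "j < n" and M: "M \<in> carrier_mat (n + d) n" and cols: "unit_cols_from j M"
    and i: "i < n + d" and c: "j \<le> c" "c < n"
  shows "(Qemb j \<theta> * M) $$ (i, c) = Qemb j \<theta> $$ (i, c)"
  by (rule mult_mat_unit_col[OF embed_carrier M i c(2)]) (use c cols M in \<open>auto simp: unit_cols_from_def\<close>)

lemma unit_cols_from_embed_mult:
  assumes j: "j < n" and M: "M \<in> carrier_mat (n + d) n" and cols: "unit_cols_from j M"
  shows "unit_cols_from (Suc j) (Qemb j \<theta> * M)"
proof -
  have "(Qemb j \<theta> * M) $$ (i, c) = (if i = c then 1 else 0)" if "i < n + d" "c < n" "Suc j \<le> c" for i c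
    using embed_mult_unit_col[OF j M cols that(1)] embed_outside(2)[OF j, of c i \<theta>] that by simp
  then show ?thesis
    using M embed_carrier[of j \<theta>] by (simp add: unit_cols_from_def)
qed

section \<open>Partial products\<close>

definition partial_Phi :: "real vec list \<Rightarrow> nat \<Rightarrow> real mat" where
  "partial_Phi ths j = embed_prod n d Qt ths j * top_id n d"

lemma embed_prod_carrier: "embed_prod n d Qt ths j \<in> carrier_mat (n + d) (n + d)"
  by (induction j) (auto intro: mult_carrier_mat[OF embed_carrier])

lemma partial_Phi_carrier: "partial_Phi ths j \<in> carrier_mat (n + d) n"
  unfolding partial_Phi_def by (rule mult_carrier_mat[OF embed_prod_carrier top_id_carrier])

lemma partial_Phi_dims [simp]: "dim_row (partial_Phi ths j) = n + d" "dim_col (partial_Phi ths j) = n"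
  using partial_Phi_carrier by auto

lemma partial_Phi_0: "partial_Phi ths 0 = top_id n d"
  by (simp add: partial_Phi_def top_id_def)

lemma partial_Phi_Suc: "partial_Phi ths (Suc j) = Qemb j (ths ! j) * partial_Phi ths j"
  unfolding partial_Phi_def by (simp add: assoc_mult_mat[OF embed_carrier embed_prod_carrier top_id_carrier])

lemma partial_Phi_cong: "(\<And>k. k < j \<Longrightarrow> ths ! k = ths' ! k) \<Longrightarrow> partial_Phi ths j = partial_Phi ths' j"
proof -
  assume "\<And>k. k < j \<Longrightarrow> ths ! k = ths' ! k"
  then have "embed_prod n d Qt ths j = embed_prod n d Qt ths' j"
    by (induction j) auto
  then show ?thesis
    by (simp add: partial_Phi_def)
qed

lemma partial_Phi_unit_cols: "j \<le> n \<Longrightarrow> unit_cols_from j (partial_Phi ths j)"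
proof (induction j)
  case 0
  then show ?case
    using unit_cols_from_0_iff[OF top_id_carrier] by (simp add: partial_Phi_0)
next
  case (Suc j)
  then show ?case
    using unit_cols_from_embed_mult[OF _ partial_Phi_carrier] by (simp add: partial_Phi_Suc)
qed

lemma partial_Phi_lower_triangular: "j \<le> n \<Longrightarrow> lower_triangular (partial_Phi ths j)"
proof (induction j)
  case 0
  then show ?case
    by (simp add: partial_Phi_0 lower_triangular_def top_id_def)
next
  case (Suc j)
  have j: "j < n" using Suc.prems by simp
  have "partial_Phi ths (Suc j) $$ (i, c) = 0" if "i < n + d" "c < n" "i < c" for i c
  proof (cases "Suc j \<le> c")
    case True
    then show ?thesis
      using partial_Phi_unit_cols[OF Suc.prems] that by (simp add: unit_cols_from_def)
  next
    case False
    then have "i < n" "i \<noteq> j" using that by auto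
    then show ?thesis
      using Suc j that embed_mult_row(1)[OF j _ _ partial_Phi_carrier]
      by (simp add: partial_Phi_Suc lower_triangular_def)
  qed
  then show ?case
    by (simp add: lower_triangular_def)
qed

lemma partial_Phi_diag: "j \<le> n \<Longrightarrow> c < j \<Longrightarrow> partial_Phi ths j $$ (c, c) = blk_mu Qt (ths ! c)"
proof (induction j)
  case (Suc j)
  have j: "j < n" using Suc.prems by simp
  show ?case
  proof (cases "c = j")
    case True
    have "unit_cols_from j (partial_Phi ths j)"
      using j by (simp add: partial_Phi_unit_cols)
    then show ?thesis
      using True j embed_mult_unit_col[OF j partial_Phi_carrier, of ths j j] embed_diag[OF j]
      by (simp add: partial_Phi_Suc)
  next
    case False
    then show ?thesis
      using Suc j embed_mult_row(1)[OF j _ _ partial_Phi_carrier] by (simp add: partial_Phi_Suc)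
  qed
qed simp

lemma partial_Phi_gram:
  "j \<le> n \<Longrightarrow> (\<And>k. k < j \<Longrightarrow> ths ! k \<in> Theta) \<Longrightarrow>
   transpose_mat (partial_Phi ths j) * partial_Phi ths j = 1\<^sub>m n"
proof (induction j)
  case 0
  then show ?case
    by (simp add: partial_Phi_0 top_id_gram)
next
  case (Suc j)
  then have "j < n" "ths ! j \<in> Theta" "transpose_mat (partial_Phi ths j) * partial_Phi ths j = 1\<^sub>m n"
    by simp_all
  then show ?case
    using orthogonal_mult_gram[OF embed_carrier partial_Phi_carrier embed_orthogonal] by (simp add: partial_Phi_Suc)
qed

section \<open>Recovering the parameters\<close>

lemma partial_Phi_col:
  assumes j: "j < n" and s: "s < Suc d"
  shows "partial_Phi ths (Suc j) $$ (block_idx n j s, j) = Qt (ths ! j) $$ (s, 0)"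
proof -
  have "unit_cols_from j (partial_Phi ths j)"
    using j by (simp add: partial_Phi_unit_cols)
  then show ?thesis
    using embed_mult_unit_col[OF j partial_Phi_carrier _ block_idx_less[OF j s] le_refl j]
      embed_block[OF j s zero_less_Suc]
    by (simp add: partial_Phi_Suc)
qed

lemma partial_Phi_inj:
  "j \<le> n \<Longrightarrow> (\<And>k. k < j \<Longrightarrow> ths ! k \<in> Theta) \<Longrightarrow> (\<And>k. k < j \<Longrightarrow> ths' ! k \<in> Theta) \<Longrightarrow>
   partial_Phi ths j = partial_Phi ths' j \<Longrightarrow> \<forall>k<j. ths ! k = ths' ! k"
proof (induction j)
  case (Suc j)
  have j: "j < n" and \<theta>: "ths ! j \<in> Theta" and \<theta>': "ths' ! j \<in> Theta"
    using Suc.prems by auto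
  have "col (Qt (ths ! j)) 0 = col (Qt (ths' ! j)) 0"
  proof (rule eq_vecI)
    fix s assume "s < dim_vec (col (Qt (ths' ! j)) 0)"
    then have s: "s < Suc d"
      using Qt_carrier[OF \<theta>'] by simp
    then show "col (Qt (ths ! j)) 0 $ s = col (Qt (ths' ! j)) 0 $ s"
      using partial_Phi_col[OF j s, of ths] partial_Phi_col[OF j s, of ths'] Suc.prems(4)
        Qt_carrier[OF \<theta>] Qt_carrier[OF \<theta>'] by simp
  qed (use Qt_carrier[OF \<theta>] Qt_carrier[OF \<theta>'] in simp)
  then have eq: "ths ! j = ths' ! j"
    by (rule Qt_col0_inj[OF \<theta> \<theta>'])
  have "partial_Phi ths j = partial_Phi ths' j"
    by (rule orthogonal_mult_cancel[OF embed_carrier partial_Phi_carrier partial_Phi_carrier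
          embed_orthogonal[OF j \<theta>]])
      (use Suc.prems(4) eq in \<open>simp add: partial_Phi_Suc\<close>)
  then show ?case
    using Suc eq less_Suc_eq by auto
qed simp

lemma embed_col_exists:
  assumes j: "j < n" and M: "M \<in> carrier_mat (n + d) n" and gram: "transpose_mat M * M = 1\<^sub>m n"
    and tri: "lower_triangular M" and cols: "unit_cols_from (Suc j) M"
  obtains \<theta> where "\<theta> \<in> Theta" "\<And>i. i < n + d \<Longrightarrow> M $$ (i, j) = Qemb j \<theta> $$ (i, j)"
proof -
  have zero: "M $$ (k, j) = 0" if "k < n" "k \<noteq> j" for k
    by (rule lower_isometry_col_support[OF M _ gram tri cols j that]) simp
  define h where "h = vec (Suc d) (\<lambda>s. M $$ (block_idx n j s, j))"
  have "h \<bullet> h = (\<Sum>s\<in>{0..<Suc d}. M $$ (block_idx n j s, j) * M $$ (block_idx n j s, j))"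
    by (simp add: h_def scalar_prod_def)
  also have "\<dots> = (\<Sum>k\<in>{0..<n + d}. M $$ (k, j) * M $$ (k, j))"
    by (rule sum_block_idx[OF j, symmetric]) (simp add: zero)
  also have "\<dots> = 1"
    using transpose_mult_mat_entry[OF M M j j] gram j by simp
  finally obtain \<theta> where \<theta>: "\<theta> \<in> Theta" and col: "col (Qt \<theta>) 0 = h"
    using Qt_col0_surj[of h] by (auto simp: h_def)
  have "M $$ (i, j) = Qemb j \<theta> $$ (i, j)" if i: "i < n + d" for i
  proof (cases rule: block_idx_cases[OF i, of j])
    case 1
    then show ?thesis
      using zero embed_outside(1)[OF j 1, of j \<theta>] j by simp
  next
    case (2 s)
    then have "Qt \<theta> $$ (s, 0) = M $$ (i, j)"
      using arg_cong[OF col, of "\<lambda>v. v $ s"] Qt_carrier[OF \<theta>] by (simp add: h_def)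
    then show ?thesis
      using embed_block[OF j 2(1) zero_less_Suc, of \<theta>] 2 by simp
  qed
  then show ?thesis
    using that \<theta> by blast
qed

lemma transpose_embed_mult_unit_cols:
  assumes j: "j < n" and \<theta>: "\<theta> \<in> Theta" and M: "M \<in> carrier_mat (n + d) n"
    and cols: "unit_cols_from (Suc j) M" and col: "\<And>i. i < n + d \<Longrightarrow> M $$ (i, j) = Qemb j \<theta> $$ (i, j)"
  shows "unit_cols_from j (transpose_mat (Qemb j \<theta>) * M)"
proof -
  note E = embed_carrier[of j \<theta>]
  note Et = transpose_carrier_mat[THEN iffD2, OF E]
  have "(transpose_mat (Qemb j \<theta>) * M) $$ (i, c) = (if i = c then 1 else 0)"
    if i: "i < n + d" and c: "c < n" "j \<le> c" for i c
  proof (cases "c = j")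
    case True
    have j': "j < n + d"
      using j by simp
    have "(transpose_mat (Qemb j \<theta>) * M) $$ (i, j) = (transpose_mat (Qemb j \<theta>) * Qemb j \<theta>) $$ (i, j)"
      unfolding transpose_mult_mat_entry[OF E M i j] transpose_mult_mat_entry[OF E E i j'] using col by simp
    then show ?thesis
      using True embed_orthogonal[OF j \<theta>] i j by simp
  next
    case False
    then have "(transpose_mat (Qemb j \<theta>) * M) $$ (i, c) = transpose_mat (Qemb j \<theta>) $$ (i, c)"
      using c cols M by (intro mult_mat_unit_col[OF Et M i c(1)]) (auto simp: unit_cols_from_def)
    then show ?thesis
      using embed_outside(1)[OF j c(1) False i] i c E by simp
  qed
  then show ?thesis
    using M E by (simp add: unit_cols_from_def)
qed

lemma lower_triangular_transpose_embed_mult: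
  assumes j: "j < n" and M: "M \<in> carrier_mat (n + d) n" and tri: "lower_triangular M"
    and cols: "unit_cols_from j (transpose_mat (Qemb j \<theta>) * M)"
  shows "lower_triangular (transpose_mat (Qemb j \<theta>) * M)"
proof -
  have "(transpose_mat (Qemb j \<theta>) * M) $$ (i, c) = 0" if "i < n + d" "c < n" "i < c" for i c
  proof (cases "j \<le> c")
    case True
    then show ?thesis
      using cols that M embed_carrier[of j \<theta>] by (simp add: unit_cols_from_def)
  next
    case False
    then show ?thesis
      using embed_mult_row(2)[OF j _ _ M] tri M that by (simp add: lower_triangular_def)
  qed
  then show ?thesis
    using M embed_carrier[of j \<theta>] by (simp add: lower_triangular_def)
qed

lemma partial_Phi_surj:
  "j \<le> n \<Longrightarrow> M \<in> carrier_mat (n + d) n \<Longrightarrow> transpose_mat M * M = 1\<^sub>m n \<Longrightarrow> lower_triangular M \<Longrightarrow>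
   unit_cols_from j M \<Longrightarrow> \<exists>ths. length ths = j \<and> set ths \<subseteq> Theta \<and> partial_Phi ths j = M"
proof (induction j arbitrary: M)
  case 0
  then show ?case
    using unit_cols_from_0_iff by (auto simp: partial_Phi_0)
next
  case (Suc j)
  have j: "j < n" and M: "M \<in> carrier_mat (n + d) n"
    using Suc.prems by simp_all
  obtain \<theta> where \<theta>: "\<theta> \<in> Theta" and col: "\<And>i. i < n + d \<Longrightarrow> M $$ (i, j) = Qemb j \<theta> $$ (i, j)"
    using embed_col_exists[OF j Suc.prems(2-5)] by blast
  note Et = transpose_carrier_mat[THEN iffD2, OF embed_carrier[of j \<theta>]]
  define M' where "M' = transpose_mat (Qemb j \<theta>) * M"
  have M': "M' \<in> carrier_mat (n + d) n"
    unfolding M'_def using Et M by simp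
  have "transpose_mat M' * M' = 1\<^sub>m n"
    unfolding M'_def using orthogonal_mult_gram[OF Et M] embed_orthogonal'[OF j \<theta>] Suc.prems(3) by simp
  moreover have cols': "unit_cols_from j M'"
    unfolding M'_def by (rule transpose_embed_mult_unit_cols[OF j \<theta> M Suc.prems(5) col])
  moreover have "lower_triangular M'"
    using lower_triangular_transpose_embed_mult[OF j M Suc.prems(4)] cols' by (simp add: M'_def)
  ultimately obtain ths where ths: "length ths = j" "set ths \<subseteq> Theta" "partial_Phi ths j = M'"
    using Suc.IH[OF _ M'] j by auto
  have "partial_Phi (ths @ [\<theta>]) (Suc j) = Qemb j \<theta> * partial_Phi ths j"
    using partial_Phi_cong[of j "ths @ [\<theta>]" ths] ths(1) by (simp add: partial_Phi_Suc nth_append)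
  also have "\<dots> = (Qemb j \<theta> * transpose_mat (Qemb j \<theta>)) * M"
    using ths(3) M by (simp add: M'_def assoc_mult_mat[OF embed_carrier Et M])
  also have "\<dots> = M"
    using embed_orthogonal'[OF j \<theta>] M by simp
  finally show ?case
    using ths \<theta> by (intro exI[of _ "ths @ [\<theta>]"]) auto
qed

lemma Phi_bij:
  "bij_betw (Phi n d Qt) {ths. length ths = n \<and> set ths \<subseteq> Theta \<and> (\<forall>k<n. p (blk_mu Qt (ths ! k)))}
     (triangular_isometries (n + d) n p)"
  (is "bij_betw _ ?D _")
proof -
  have Phi: "Phi n d Qt ths = partial_Phi ths n" for ths
    by (simp add: Phi_def partial_Phi_def)
  have "inj_on (Phi n d Qt) ?D"
  proof (rule inj_onI)
    fix ths ths' assume D: "ths \<in> ?D" "ths' \<in> ?D" and eq: "Phi n d Qt ths = Phi n d Qt ths'"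
    have "\<forall>k<n. ths ! k = ths' ! k"
      by (rule partial_Phi_inj) (use D eq nth_mem in \<open>auto simp: Phi\<close>)
    then show "ths = ths'"
      using D by (auto intro: nth_equalityI)
  qed
  moreover have "Phi n d Qt ths \<in> triangular_isometries (n + d) n p" if D: "ths \<in> ?D" for ths
  proof -
    have "ths ! k \<in> Theta" if "k < n" for k
      using D nth_mem that by blast
    then show ?thesis
      using D partial_Phi_carrier partial_Phi_gram[OF le_refl] partial_Phi_lower_triangular[OF le_refl]
        partial_Phi_diag[OF le_refl]
      unfolding triangular_isometries_def Phi by simp
  qed
  moreover have "triangular_isometries (n + d) n p \<subseteq> Phi n d Qt ` ?D"
  proof
    fix M assume M: "M \<in> triangular_isometries (n + d) n p"
    then obtain ths where ths: "length ths = n" "set ths \<subseteq> Theta" "partial_Phi ths n = M"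
      using partial_Phi_surj[of n M] by (auto simp: triangular_isometries_def unit_cols_from_def)
    moreover have "\<forall>k<n. p (blk_mu Qt (ths ! k))"
      using M ths partial_Phi_diag[of n] by (auto simp: triangular_isometries_def)
    ultimately show "M \<in> Phi n d Qt ` ?D"
      by (auto simp: Phi)
  qed
  ultimately show ?thesis
    unfolding bij_betw_def by blast
qed

end

theorem theorem6p4:
  fixes n d :: nat and Theta :: "real vec set" and Qt :: "real vec \<Rightarrow> real mat"
  assumes "1 \<le> d" and "d \<le> n"
    and "ORP (d + 1) 1 Theta Qt"
  shows "bij_betw (Phi n d Qt)
           {ths. length ths = n \<and> set ths \<subseteq> Theta \<and> (\<forall>k < n. blk_mu Qt (ths ! k) > 0)}
           ((\<lambda>(A, C). stack n d C A) ` {(A, C). strict_OTSON n d A C})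
       \<and> bij_betw (Phi n d Qt)
           {ths. length ths = n \<and> set ths \<subseteq> Theta \<and> (\<forall>k < n. blk_mu Qt (ths ! k) \<noteq> 0)}
           ((\<lambda>(A, C). stack n d C A) ` {(A, C). unreduced_OTSON n d A C})"
proof -
  interpret orthogonal_reduction n d Theta Qt
    using assms(3) by unfold_locales
  have "(\<lambda>(A, C). stack n d C A) ` {(A, C). strict_OTSON n d A C}
      = triangular_isometries (n + d) n (\<lambda>x. 0 < x)"
    using stack_OTSON_image[of n d "\<lambda>x. 0 < x"] by (simp add: strict_OTSON_def)
  moreover have "(\<lambda>(A, C). stack n d C A) ` {(A, C). unreduced_OTSON n d A C}
      = triangular_isometries (n + d) n (\<lambda>x. x \<noteq> 0)"
    using stack_OTSON_image[of n d "\<lambda>x. x \<noteq> 0"] by (simp add: unreduced_OTSON_def)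
  ultimately show ?thesis
    using Phi_bij[of "\<lambda>x. 0 < x"] Phi_bij[of "\<lambda>x. x \<noteq> 0"] by simp
qed

end
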